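(* Let $M$ be a finite set, let $\mathcal{X}\subseteq\mathcal{P}(M)$ be a closure system on $M$, and let $\mathcal{M}=\{N_i\mid i\in I\}\subseteq\mathcal{P}(M)$ be a consortial domain on $M$. If $\mathcal{M}^{*}:=\mathcal{M}\cup\{M\}$ is a closure system on $M$, then $\bigcup_{N\in\mathcal{M}^{*}}\mathcal{X}_N$ is a closure system on $M$.
   Context: A closure system on $M$ is a family of subsets of $M$ containing $M$ and closed under intersections. A consortial domain on $M$ is a family $\mathcal{M}=\{N_i\mid i\in I\}\subseteq\mathcal{P}(M)$ with $\bigcup_{i\in I}N_i=M$. For $N\subseteq M$, $\mathcal{X}_N:=\{X\cap N\mid X\in\mathcal{X}\}$. *)

theory Defs
  imports Main
begin

definition closure_system :: "'a set \<Rightarrow> 'a set set \<Rightarrow> bool" where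
  "closure_system M X \<longleftrightarrow> X \<subseteq> Pow M \<and> M \<in> X \<and>
     (\<forall>S. S \<subseteq> X \<longrightarrow> S \<noteq> {} \<longrightarrow> \<Inter>S \<in> X)"

definition consortial_domain :: "'a set \<Rightarrow> 'i set \<Rightarrow> ('i \<Rightarrow> 'a set) \<Rightarrow> bool" where
  "consortial_domain M I N \<longleftrightarrow> (\<forall>i\<in>I. N i \<subseteq> M) \<and> (\<Union>i\<in>I. N i) = M"

definition restrict_family :: "'a set set \<Rightarrow> 'a set \<Rightarrow> 'a set set" where
  "restrict_family X N = {A \<inter> N | A. A \<in> X}"

end

theory Submission
  imports Defs
begin

text \<open>Every member of the union is \<open>A \<inter> K\<close> with \<open>A \<in> X\<close> and \<open>K\<close> in the closure system
  \<open>N ` I \<union> {M}\<close>; an intersection of such sets is the intersection of the \<open>A\<close>'s (a member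
  of \<open>X\<close>) with the intersection of the \<open>K\<close>'s (a member of \<open>N ` I \<union> {M}\<close>). So the
  pairwise meets of any two closure systems form a closure system.\<close>

definition meet_family :: "'a set set \<Rightarrow> 'a set set \<Rightarrow> 'a set set" where
  "meet_family X Y = {A \<inter> B | A B. A \<in> X \<and> B \<in> Y}"

lemma closure_system_InterI:
  "closure_system M X \<Longrightarrow> S \<subseteq> X \<Longrightarrow> S \<noteq> {} \<Longrightarrow> \<Inter>S \<in> X"
  unfolding closure_system_def by blast

lemma Union_restrict_family_eq_meet_family:
  "(\<Union>K \<in> Y. restrict_family X K) = meet_family X Y"
  unfolding restrict_family_def meet_family_def by blast

lemma Inter_meet_family_mem:
  assumes X: "closure_system M X" and Y: "closure_system M Y"
    and S: "S \<subseteq> meet_family X Y" "S \<noteq> {}"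
  shows "\<Inter>S \<in> meet_family X Y"
proof -
  have "\<forall>s\<in>S. \<exists>A B. A \<in> X \<and> B \<in> Y \<and> s = A \<inter> B"
    using S(1) unfolding meet_family_def by blast
  then obtain f g where fg: "\<And>s. s \<in> S \<Longrightarrow> f s \<in> X \<and> g s \<in> Y \<and> s = f s \<inter> g s"
    by metis
  have "\<Inter>S = \<Inter>(f ` S) \<inter> \<Inter>(g ` S)"
    using fg by blast
  moreover have "\<Inter>(f ` S) \<in> X"
    using fg S(2) by (intro closure_system_InterI[OF X]) auto
  moreover have "\<Inter>(g ` S) \<in> Y"
    using fg S(2) by (intro closure_system_InterI[OF Y]) auto
  ultimately show ?thesis
    unfolding meet_family_def by blast
qed

lemma closure_system_meet_family:
  assumes X: "closure_system M X" and Y: "closure_system M Y"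
  shows "closure_system M (meet_family X Y)"
proof -
  have "X \<subseteq> Pow M" "M \<in> X" "M \<in> Y"
    using X Y unfolding closure_system_def by auto
  then have "meet_family X Y \<subseteq> Pow M" "M \<in> meet_family X Y"
    unfolding meet_family_def by auto
  with Inter_meet_family_mem[OF X Y] show ?thesis
    unfolding closure_system_def by (intro conjI allI impI)
qed

theorem mainTheorem3:
  fixes M :: "'a set" and X :: "'a set set" and I :: "'i set" and N :: "'i \<Rightarrow> 'a set"
  assumes "finite M"
    and "closure_system M X"
    and "consortial_domain M I N"
    and "closure_system M (N ` I \<union> {M})"
  shows "closure_system M (\<Union>K \<in> N ` I \<union> {M}. restrict_family X K)"
  unfolding Union_restrict_family_eq_meet_family
  using closure_system_meet_family[OF assms(2,4)] .

end
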